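(* Let $M$ be a finite abelian group of exponent greater than $2$ and let $f$ be a half-automorphism of $L_M$. Then there exist a unique $f'\in\mathrm{Aut}(K)$ and elements $x,y\in M$ with $x^2=y^2=1$ such that $f(A,1)=(f'(A),\alpha_{(x,y)}(A))$ for every $A\in K$.
   Context: Let $K=\{1,a,b,c\}$ be the Klein four-group. Set $L_M=K\times M$ with the operation $(A,x)*(B,y)=(AB,xy)$ if $B=1$, and $(A,x)*(B,y)=(AB,x^{-1}y)$ if $B\neq 1$. For $x,y\in M$ with $x^2=y^2=1$, $\alpha_{(x,y)}:K\to M$ is the map $\alpha_{(x,y)}(1)=1$, $\alpha_{(x,y)}(a)=x$, $\alpha_{(x,y)}(b)=y$, $\alpha_{(x,y)}(c)=xy$. A half-automorphism of a loop $L$ is a bijection $f:L\to L$ such that $f(XY)\in\{f(X)f(Y),f(Y)f(X)\}$ for all $X,Y\in L$. *)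

theory Defs
  imports "HOL-Algebra.Multiplicative_Group"
begin

definition group_exponent :: "('a, 'b) monoid_scheme \<Rightarrow> nat" where
  "group_exponent G = Lcm (group.ord G ` carrier G)"

datatype klein = K1 | Ka | Kb | Kc

fun kmult :: "klein \<Rightarrow> klein \<Rightarrow> klein" where
  "kmult K1 y = y"
| "kmult x K1 = x"
| "kmult Ka Ka = K1" | "kmult Kb Kb = K1" | "kmult Kc Kc = K1"
| "kmult Ka Kb = Kc" | "kmult Kb Ka = Kc"
| "kmult Ka Kc = Kb" | "kmult Kc Ka = Kb"
| "kmult Kb Kc = Ka" | "kmult Kc Kb = Ka"

definition klein_aut :: "(klein \<Rightarrow> klein) \<Rightarrow> bool" where
  "klein_aut g \<longleftrightarrow> bij g \<and> (\<forall>A B. g (kmult A B) = kmult (g A) (g B))"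

definition LM_mult :: "('a, 'b) monoid_scheme \<Rightarrow> klein \<times> 'a \<Rightarrow> klein \<times> 'a \<Rightarrow> klein \<times> 'a" where
  "LM_mult M X Y = (case X of (A, x) \<Rightarrow> case Y of (B, y) \<Rightarrow>
     if B = K1 then (kmult A B, x \<otimes>\<^bsub>M\<^esub> y)
     else (kmult A B, inv\<^bsub>M\<^esub> x \<otimes>\<^bsub>M\<^esub> y))"

definition LM_carrier :: "('a, 'b) monoid_scheme \<Rightarrow> (klein \<times> 'a) set" where
  "LM_carrier M = (UNIV :: klein set) \<times> carrier M"

definition half_aut_LM :: "('a, 'b) monoid_scheme \<Rightarrow> (klein \<times> 'a \<Rightarrow> klein \<times> 'a) \<Rightarrow> bool" where
  "half_aut_LM M f \<longleftrightarrow> bij_betw f (LM_carrier M) (LM_carrier M) \<and>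
     (\<forall>X\<in>LM_carrier M. \<forall>Y\<in>LM_carrier M.
        f (LM_mult M X Y) = LM_mult M (f X) (f Y) \<or> f (LM_mult M X Y) = LM_mult M (f Y) (f X))"

fun alpha :: "('a, 'b) monoid_scheme \<Rightarrow> 'a \<Rightarrow> 'a \<Rightarrow> klein \<Rightarrow> 'a" where
  "alpha M x y K1 = \<one>\<^bsub>M\<^esub>"
| "alpha M x y Ka = x"
| "alpha M x y Kb = y"
| "alpha M x y Kc = x \<otimes>\<^bsub>M\<^esub> y"

end

theory Submission
  imports Defs
begin

text \<open>Write f (A, m) = (p(A, m), q(A, m)) and fix y \<in> M with y^2 \<noteq> 1. If A \<noteq> 1 then
  p(A, m) \<noteq> 1: otherwise f would send the distinct products (A, m)(1, y) and (1, y)(A, m) to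
  the same element of the abelian subgroup 1 \<times> M. So p(-, 1) is a homomorphism of K with
  trivial kernel, i.e. an automorphism. Next, by injectivity, whenever X Y \<noteq> Y X the images
  f (X Y), f (Y X) are the two products f X f Y, f Y f X, so the product of their second
  coordinates is computable in M. For A \<noteq> 1 the pair (A, y), (A, inv y) arises both from
  A = B C with B, C \<noteq> 1, which yields 1, and from A = A 1, which yields q(A, 1)^2. Finally the
  single product (a, 1)(b, 1) = (c, 1) gives q(c, 1) = q(a, 1) q(b, 1).\<close>

lemma kmult_K1_right [simp]: "kmult A K1 = A"
  by (cases A) auto

lemma kmult_self [simp]: "kmult A A = K1"
  by (cases A) auto

lemma kmult_commute: "kmult A B = kmult B A"
  by (cases A; cases B) auto

lemma kmult_eq_K1_iff: "kmult A B = K1 \<longleftrightarrow> A = B"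
  by (cases A; cases B) auto

lemma klein_nontrivial_as_product:
  assumes "C \<noteq> K1"
  obtains A B where "A \<noteq> K1" "B \<noteq> K1" "kmult A B = C"
proof (cases C)
  case Ka with that[of Kb Kc] show ?thesis by simp
next
  case Kb with that[of Ka Kc] show ?thesis by simp
next
  case Kc with that[of Ka Kb] show ?thesis by simp
qed (use assms in simp)

lemma klein_aut_if_hom_trivial_kernel:
  assumes hom: "\<And>A B. g (kmult A B) = kmult (g A) (g B)"
    and kernel: "\<And>A. g A = K1 \<Longrightarrow> A = K1"
  shows "klein_aut g"
proof -
  have "inj g"
  proof (rule injI)
    fix A B assume "g A = g B"
    then have "g (kmult A B) = K1" by (simp add: hom)
    then show "A = B" using kernel kmult_eq_K1_iff by blast
  qed
  moreover have "finite (UNIV :: klein set)"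
  proof -
    have "(UNIV :: klein set) = {K1, Ka, Kb, Kc}" using klein.exhaust by auto
    then show ?thesis by (metis finite.emptyI finite.insertI)
  qed
  ultimately have "bij g" by (simp add: bij_def finite_UNIV_inj_surj)
  then show ?thesis using hom by (simp add: klein_aut_def)
qed

lemma LM_mult_simp [simp]:
  "LM_mult M (A, x) (B, y) =
     (kmult A B, if B = K1 then x \<otimes>\<^bsub>M\<^esub> y else inv\<^bsub>M\<^esub> x \<otimes>\<^bsub>M\<^esub> y)"
  by (simp add: LM_mult_def)

lemma mem_LM_carrier_iff [simp]: "(A, x) \<in> LM_carrier M \<longleftrightarrow> x \<in> carrier M"
  by (simp add: LM_carrier_def)

lemma (in group) exponent_gt_2_imp_square_ne_one:
  assumes "2 < group_exponent G"
  shows "\<exists>y\<in>carrier G. y \<otimes> y \<noteq> \<one>"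
proof (rule ccontr)
  assume "\<not> ?thesis"
  then have "ord y dvd 2" if "y \<in> carrier G" for y
    using that pow_eq_id[of y 2] by (simp add: numeral_2_eq_2)
  then have "group_exponent G dvd 2"
    unfolding group_exponent_def by (auto intro: Lcm_least)
  with assms show False by (auto dest: dvd_imp_le)
qed

lemma (in group) inv_eq_self_iff: "x \<in> carrier G \<Longrightarrow> inv x = x \<longleftrightarrow> x \<otimes> x = \<one>"
  using inv_equality r_inv by metis

lemma (in comm_group) snd_LM_mult_both_orders:
  assumes "u \<in> carrier G" "v \<in> carrier G"
  shows "snd (LM_mult G (P, u) (R, v)) \<otimes> snd (LM_mult G (R, v) (P, u)) =
           (if R = K1 then u \<otimes> u else \<one>) \<otimes> (if P = K1 then v \<otimes> v else \<one>)"
proof -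
  have cancel: "a \<otimes> (b \<otimes> inv a) = b" if "a \<in> carrier G" "b \<in> carrier G" for a b
    using that by (metis inv_closed m_lcomm r_inv r_one)
  have cancel': "a \<otimes> (inv a \<otimes> b) = b" if "a \<in> carrier G" "b \<in> carrier G" for a b
    using that by (metis inv_closed m_assoc r_inv l_one)
  show ?thesis
    using assms by (simp add: m_assoc cancel cancel' inv_mult_group m_lcomm m_comm)
qed

lemma (in group) LM_mult_one_one [simp]: "LM_mult G (A, \<one>) (B, \<one>) = (kmult A B, \<one>)"
  by simp

lemma fst_LM_mult: "fst (LM_mult M X Y) = kmult (fst X) (fst Y)"
  by (simp add: LM_mult_def split: prod.split)

locale LM_half_aut = comm_group M for M :: "('a, 'b) monoid_scheme" (structure) +
  fixes f :: "klein \<times> 'a \<Rightarrow> klein \<times> 'a"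
  assumes half_aut: "half_aut_LM M f"
begin

lemma snd_f_closed:
  assumes "x \<in> carrier M"
  shows "snd (f (A, x)) \<in> carrier M"
proof -
  have "f (A, x) \<in> LM_carrier M"
    using half_aut assms bij_betwE unfolding half_aut_LM_def by fastforce
  then show ?thesis by (simp add: LM_carrier_def mem_Times_iff)
qed

lemma f_eq_iff:
  "x \<in> carrier M \<Longrightarrow> y \<in> carrier M \<Longrightarrow> f (A, x) = f (B, y) \<longleftrightarrow> A = B \<and> x = y"
  using half_aut bij_betw_imp_inj_on[of f "LM_carrier M" "LM_carrier M"]
  unfolding half_aut_LM_def inj_on_def by fastforce

lemma f_mult_cases:
  assumes "x \<in> carrier M" "y \<in> carrier M"
  shows "f (LM_mult M (A, x) (B, y)) \<in>
           {LM_mult M (f (A, x)) (f (B, y)), LM_mult M (f (B, y)) (f (A, x))}"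
  using half_aut assms unfolding half_aut_LM_def by fastforce

lemma snd_f_mult_both_orders:
  assumes x: "x \<in> carrier M" and y: "y \<in> carrier M"
    and noncomm: "LM_mult M (A, x) (B, y) \<noteq> LM_mult M (B, y) (A, x)"
  shows "snd (f (LM_mult M (A, x) (B, y))) \<otimes> snd (f (LM_mult M (B, y) (A, x))) =
           (if fst (f (B, y)) = K1 then snd (f (A, x)) \<otimes> snd (f (A, x)) else \<one>) \<otimes>
           (if fst (f (A, x)) = K1 then snd (f (B, y)) \<otimes> snd (f (B, y)) else \<one>)"
proof -
  obtain P u R v where fx: "f (A, x) = (P, u)" and fy: "f (B, y) = (R, v)" by fastforce
  have u: "u \<in> carrier M" and v: "v \<in> carrier M"
    using snd_f_closed x y fx fy by (metis snd_conv)+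
  define U V where "U = LM_mult M (P, u) (R, v)" and "V = LM_mult M (R, v) (P, u)"
  have UV: "snd U \<in> carrier M" "snd V \<in> carrier M"
    using u v by (simp_all add: U_def V_def)
  have "f (LM_mult M (A, x) (B, y)) \<in> {U, V}" "f (LM_mult M (B, y) (A, x)) \<in> {U, V}"
    using f_mult_cases[OF x y, of A B] f_mult_cases[OF y x, of B A]
    by (auto simp: fx fy U_def V_def)
  moreover have "f (LM_mult M (A, x) (B, y)) \<noteq> f (LM_mult M (B, y) (A, x))"
    using noncomm f_eq_iff x y by (simp split: if_splits)
  ultimately have "snd (f (LM_mult M (A, x) (B, y))) \<otimes> snd (f (LM_mult M (B, y) (A, x))) =
                   snd U \<otimes> snd V"
    using UV m_comm by auto
  also have "\<dots> = (if R = K1 then u \<otimes> u else \<one>) \<otimes> (if P = K1 then v \<otimes> v else \<one>)"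
    unfolding U_def V_def using u v by (rule snd_LM_mult_both_orders)
  finally show ?thesis by (simp add: fx fy)
qed

lemma f_one: "f (K1, \<one>) = (K1, \<one>)"
proof -
  obtain P z where fz: "f (K1, \<one>) = (P, z)" by fastforce
  have z: "z \<in> carrier M" using snd_f_closed[of \<one> K1] fz by simp
  have square: "(P, z) = LM_mult M (P, z) (P, z)"
    using f_mult_cases[of \<one> \<one> K1 K1] fz by (simp del: LM_mult_simp)
  then have "P = K1" by simp
  with square have "z = z \<otimes> z" by simp
  with z \<open>P = K1\<close> show ?thesis by (simp add: fz)
qed

lemma fst_f_mult_one: "fst (f (kmult A B, \<one>)) = kmult (fst (f (A, \<one>))) (fst (f (B, \<one>)))"
  using f_mult_cases[of \<one> \<one> A B]
  by (auto simp del: LM_mult_simp simp: fst_LM_mult kmult_commute)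

lemma fst_f_K1_of_square_ne_one:
  assumes y: "y \<in> carrier M" "y \<otimes> y \<noteq> \<one>"
  shows "fst (f (K1, y)) = K1"
proof (rule ccontr)
  obtain P w where fy: "f (K1, y) = (P, w)" by fastforce
  have w: "w \<in> carrier M" using snd_f_closed[of y K1] y fy by simp
  assume "fst (f (K1, y)) \<noteq> K1"
  then have "f (K1, y \<otimes> y) = (K1, \<one>)"
    using f_mult_cases[of y y K1 K1] y w fy by simp
  with y f_eq_iff[of "y \<otimes> y" \<one> K1 K1] show False by (simp add: f_one)
qed

end

locale LM_half_aut_non_boolean = LM_half_aut +
  assumes non_boolean: "\<exists>y\<in>carrier M. y \<otimes> y \<noteq> \<one>"
begin

lemma fst_f_ne_K1:
  assumes B: "B \<noteq> K1" and m: "m \<in> carrier M"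
  shows "fst (f (B, m)) \<noteq> K1"
proof
  obtain y where y: "y \<in> carrier M" "y \<otimes> y \<noteq> \<one>" using non_boolean by blast
  obtain w where fy: "f (K1, y) = (K1, w)"
    using fst_f_K1_of_square_ne_one[OF y] by (metis prod.collapse)
  have w: "w \<in> carrier M" using snd_f_closed[of y K1] y fy by simp
  assume "fst (f (B, m)) = K1"
  then obtain z where fm: "f (B, m) = (K1, z)" by (metis prod.collapse)
  have z: "z \<in> carrier M" using snd_f_closed[OF m, of B] fm by simp
  have "f (B, m \<otimes> y) = (K1, z \<otimes> w)" "f (B, inv y \<otimes> m) = (K1, z \<otimes> w)"
    using f_mult_cases[OF m y(1), of B K1] f_mult_cases[OF y(1) m, of K1 B] B fy fm w z
    by (auto simp: m_comm)
  then have "m \<otimes> y = inv y \<otimes> m"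
    using f_eq_iff[of "m \<otimes> y" "inv y \<otimes> m" B B] m y(1) by simp
  then have "inv y = y" using m y by (metis inv_closed m_comm right_cancel)
  with y show False using inv_eq_self_iff by blast
qed

lemma klein_aut_fst_f_one: "klein_aut (\<lambda>A. fst (f (A, \<one>)))"
  using fst_f_ne_K1 by (intro klein_aut_if_hom_trivial_kernel fst_f_mult_one) blast

lemma snd_f_one_square:
  assumes C: "C \<noteq> K1"
  shows "snd (f (C, \<one>)) \<otimes> snd (f (C, \<one>)) = \<one>"
proof -
  obtain y where y: "y \<in> carrier M" "y \<otimes> y \<noteq> \<one>" using non_boolean by blast
  obtain A B where A: "A \<noteq> K1" and B: "B \<noteq> K1" and AB: "kmult A B = C"
    using klein_nontrivial_as_product[OF C] .
  have iy: "(C, y) \<noteq> (C, inv y)" using y inv_eq_self_iff by (metis prod.inject)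
  \<comment> \<open>(C, y) and (C, inv y) are the two products of (A, 1) and (B, y), and also of (C, 1)
    and (K1, y).\<close>
  have "snd (f (C, y)) \<otimes> snd (f (C, inv y)) = \<one>"
    using snd_f_mult_both_orders[of \<one> y A B] y A B AB iy fst_f_ne_K1
    by (simp add: kmult_commute)
  moreover have "snd (f (C, y)) \<otimes> snd (f (C, inv y)) = snd (f (C, \<one>)) \<otimes> snd (f (C, \<one>))"
    using snd_f_mult_both_orders[of \<one> y C K1] y C iy fst_f_ne_K1
      fst_f_K1_of_square_ne_one[OF y] snd_f_closed[of \<one> C] by simp
  ultimately show ?thesis by simp
qed

lemma snd_f_Kc_one: "snd (f (Kc, \<one>)) = snd (f (Ka, \<one>)) \<otimes> snd (f (Kb, \<one>))"
proof -
  obtain P x where fa: "f (Ka, \<one>) = (P, x)" by fastforce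
  obtain R y where fb: "f (Kb, \<one>) = (R, y)" by fastforce
  have x: "x \<in> carrier M" "x \<otimes> x = \<one>" and y: "y \<in> carrier M" "y \<otimes> y = \<one>"
    using snd_f_closed[of \<one> Ka] snd_f_closed[of \<one> Kb]
      snd_f_one_square[of Ka] snd_f_one_square[of Kb] fa fb by simp_all
  then have "inv x = x" "inv y = y" by (simp_all add: inv_eq_self_iff)
  have "P \<noteq> K1" "R \<noteq> K1"
    using fst_f_ne_K1[of Ka \<one>] fst_f_ne_K1[of Kb \<one>] fa fb by auto
  then show ?thesis
    using f_mult_cases[of \<one> \<one> Ka Kb] x y \<open>inv x = x\<close> \<open>inv y = y\<close> fa fb
    by (auto simp: m_comm)
qed

lemma f_one_eq_alpha:
  "f (A, \<one>) = (fst (f (A, \<one>)), alpha M (snd (f (Ka, \<one>))) (snd (f (Kb, \<one>))) A)"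
  using f_one snd_f_Kc_one by (cases A) (simp_all add: prod_eq_iff)

end

theorem corollary4p7:
  fixes M :: "('a, 'b) monoid_scheme" and f :: "klein \<times> 'a \<Rightarrow> klein \<times> 'a"
  assumes "comm_group M" and "finite (carrier M)" and "group_exponent M > 2"
    and "half_aut_LM M f"
  shows "\<exists>!f'. klein_aut f' \<and>
           (\<exists>x\<in>carrier M. \<exists>y\<in>carrier M. x \<otimes>\<^bsub>M\<^esub> x = \<one>\<^bsub>M\<^esub> \<and> y \<otimes>\<^bsub>M\<^esub> y = \<one>\<^bsub>M\<^esub> \<and>
              (\<forall>A. f (A, \<one>\<^bsub>M\<^esub>) = (f' A, alpha M x y A)))"
proof -
  interpret LM_half_aut M f
    using assms(1,4) by (simp add: LM_half_aut_def LM_half_aut_axioms_def)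
  interpret LM_half_aut_non_boolean M f
    using exponent_gt_2_imp_square_ne_one[OF assms(3)] by unfold_locales
  show ?thesis
    using klein_aut_fst_f_one snd_f_closed snd_f_one_square f_one_eq_alpha
    by (intro ex1I[of _ "\<lambda>A. fst (f (A, \<one>\<^bsub>M\<^esub>))"]) (blast, fastforce)
qed

end
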